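(* Let $G$ be a graph, let $Q\subset B\subset G$ and $x\in B$. Let $\xi$ be a random walk started at $x$ and stopped upon exiting $B$ (identified with its trace). Then for every positive integer $t$, $$\Pr[\xi\cap Q\neq\emptyset]\ge \Pr[B\subset A_t(x\mapsto B)]\cdot\frac{|Q|}{t}.$$
   Context: $G$ is a connected locally finite graph and "random walk" means simple random walk on $G$. IDLA with pausing: for finite $S\subset G$, $y\in G$, $T\subset G$, let $\zeta$ be a random walk started at $y$, $t_S$ the first time $\zeta\notin S$, $t_T$ the first time $\zeta\notin T$, and $A(S;y\mapsto T)=S\cup\{\zeta(t_S\wedge(t_T-1))\}$. For $y_1,\dots,y_k$ define inductively (independent walks) $S_0=S$, $S_j=A(S_{j-1};y_j\mapsto T)$, $A(S;y_1,\dots,y_k\mapsto T)=S_k$. Then $A_t(x\mapsto B)=A(\emptyset;x,\dots,x\mapsto B)$ with $t$ copies of $x$. *)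

theory Defs
  imports "HOL-Probability.Probability"
begin

definition nbrs :: "('a \<Rightarrow> 'a \<Rightarrow> bool) \<Rightarrow> 'a \<Rightarrow> 'a set" where
  "nbrs E v = {w. E v w}"

text \<open>Distribution of the first n steps of simple random walk started at x:
  the list [zeta(0), ..., zeta(n)].\<close>
fun walk_pmf :: "('a \<Rightarrow> 'a \<Rightarrow> bool) \<Rightarrow> 'a \<Rightarrow> nat \<Rightarrow> 'a list pmf" where
  "walk_pmf E x 0 = return_pmf [x]"
| "walk_pmf E x (Suc n) =
     bind_pmf (walk_pmf E x n) (\<lambda>p. map_pmf (\<lambda>y. p @ [y]) (pmf_of_set (nbrs E (last p))))"

text \<open>Probability that the walk started at x, stopped upon exiting B, visits Q.
  Defined as the (monotone) limit of the probabilities of visiting Q before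
  exiting B within the first n steps.\<close>
definition hit_prob :: "('a \<Rightarrow> 'a \<Rightarrow> bool) \<Rightarrow> 'a \<Rightarrow> 'a set \<Rightarrow> 'a set \<Rightarrow> real" where
  "hit_prob E x B Q = (SUP n. measure_pmf.prob (walk_pmf E x n)
      {p. \<exists>k<length p. p ! k \<in> Q \<and> (\<forall>j<k. p ! j \<in> B)})"

definition first_exit :: "'a set \<Rightarrow> 'a list \<Rightarrow> nat option" where
  "first_exit S p = (if \<exists>k<length p. p ! k \<notin> S
      then Some (LEAST k. k < length p \<and> p ! k \<notin> S) else None)"

text \<open>The point zeta(t_S min (t_T - 1)), if it is determined by the path prefix p.\<close>
definition stop_point :: "'a set \<Rightarrow> 'a set \<Rightarrow> 'a list \<Rightarrow> 'a option" where
  "stop_point S T p = (case (first_exit S p, first_exit T p) of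
       (Some a, Some b) \<Rightarrow> Some (p ! min a (b - 1))
     | (Some a, None) \<Rightarrow> Some (p ! a)
     | (None, Some b) \<Rightarrow> Some (p ! (b - 1))
     | (None, None) \<Rightarrow> None)"

text \<open>One step A(S; y |-> T) of IDLA with pausing, using only the first n steps of
  the walk; None means the walk has not stopped within n steps.\<close>
definition aggr_step :: "('a \<Rightarrow> 'a \<Rightarrow> bool) \<Rightarrow> nat \<Rightarrow> 'a set \<Rightarrow> 'a \<Rightarrow> 'a set \<Rightarrow> 'a set option pmf" where
  "aggr_step E n S y T = map_pmf (\<lambda>p. map_option (\<lambda>z. insert z S) (stop_point S T p)) (walk_pmf E y n)"

text \<open>A_t(x |-> T) with every walk truncated at n steps (None = some walk did not stop).\<close>
definition idla_trunc :: "('a \<Rightarrow> 'a \<Rightarrow> bool) \<Rightarrow> nat \<Rightarrow> nat \<Rightarrow> 'a \<Rightarrow> 'a set \<Rightarrow> 'a set option pmf" where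
  "idla_trunc E n t x T = ((\<lambda>M. bind_pmf M (\<lambda>r. case r of None \<Rightarrow> return_pmf None
                                           | Some S \<Rightarrow> aggr_step E n S x T)) ^^ t)
                        (return_pmf (Some {}))"

text \<open>Pr[B \<subseteq> A_t(x |-> T)], as the monotone limit of the truncated probabilities.\<close>
definition idla_cover_prob :: "('a \<Rightarrow> 'a \<Rightarrow> bool) \<Rightarrow> nat \<Rightarrow> 'a \<Rightarrow> 'a set \<Rightarrow> 'a set \<Rightarrow> real" where
  "idla_cover_prob E t x T B = (SUP n. measure_pmf.prob (idla_trunc E n t x T)
      {r. \<exists>S. r = Some S \<and> B \<subseteq> S})"

end

theory Submission
  imports Defs
begin

text \<open>Each of the \<open>t\<close> particles adds at most one site to the aggregate, and it adds a site
  of \<open>Q\<close> only if its walk, started at \<open>x\<close>, visits \<open>Q\<close> before leaving \<open>B\<close>: the site it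
  settles at is visited no later than the step before the exit from \<open>B\<close>. Hence the expected
  number of sites of \<open>Q\<close> in \<open>A\<^sub>t(x \<mapsto> B)\<close> is at most \<open>t\<close> times the hitting probability. On the
  event \<open>B \<subseteq> A\<^sub>t(x \<mapsto> B)\<close> this number equals \<open>|Q|\<close>, and Markov's inequality concludes.
  All bounds are proved for walks truncated at \<open>n\<close> steps and pass to the supremum over \<open>n\<close>.\<close>

definition hits_before_exit :: "'a set \<Rightarrow> 'a set \<Rightarrow> 'a list set" where
  "hits_before_exit Q B = {p. \<exists>k<length p. p ! k \<in> Q \<and> (\<forall>j<k. p ! j \<in> B)}"

definition aggr_count :: "'a set \<Rightarrow> 'a set option \<Rightarrow> ennreal" where
  "aggr_count Q r = (case r of None \<Rightarrow> 0 | Some S \<Rightarrow> of_nat (card (Q \<inter> S)))"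

lemma walk_pmf_starts_at:
  assumes "p \<in> set_pmf (walk_pmf E x n)"
  shows "p \<noteq> [] \<and> p ! 0 = x"
  using assms
proof (induction n arbitrary: p)
  case (Suc n)
  then obtain q y where "q \<in> set_pmf (walk_pmf E x n)" "p = q @ [y]"
    by auto
  with Suc.IH[of q] show ?case by (simp add: nth_append)
qed simp

lemma first_exit_SomeD:
  assumes "first_exit S p = Some k"
  shows "k < length p \<and> p ! k \<notin> S \<and> (\<forall>j<k. p ! j \<in> S)"
proof -
  from assms have ex: "\<exists>k<length p. p ! k \<notin> S"
    and k: "k = (LEAST k. k < length p \<and> p ! k \<notin> S)"
    by (auto simp: first_exit_def split: if_splits)
  have "k < length p \<and> p ! k \<notin> S"
    unfolding k using ex by (rule LeastI_ex)
  moreover have "\<forall>j<k. p ! j \<in> S"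
    using k calculation not_less_Least by fastforce
  ultimately show ?thesis by blast
qed

lemma first_exit_NoneD: "first_exit S p = None \<Longrightarrow> \<forall>j<length p. p ! j \<in> S"
  by (auto simp: first_exit_def split: if_splits)

lemma stop_point_in_trace:
  assumes "p \<noteq> []" "p ! 0 \<in> T" "stop_point S T p = Some z"
  shows "\<exists>k<length p. p ! k = z \<and> (\<forall>j<k. p ! j \<in> T)"
proof (cases "first_exit T p")
  case None
  from assms(3) None obtain a where a: "first_exit S p = Some a" "z = p ! a"
    by (cases "first_exit S p") (simp_all add: stop_point_def)
  with first_exit_SomeD[OF a(1)] first_exit_NoneD[OF None] show ?thesis
    by (intro exI[of _ a]) auto
next
  case (Some b)
  note b = first_exit_SomeD[OF Some]
  with assms(2) have "b \<noteq> 0" by metis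
  obtain k where "k \<le> b - 1" "z = p ! k"
    using assms(3) Some by (cases "first_exit S p") (auto simp: stop_point_def intro: min.cobounded2)
  with b \<open>b \<noteq> 0\<close> show ?thesis
    by (intro exI[of _ k]) auto
qed

lemma aggr_step_count_le:
  assumes "x \<in> T"
  shows "(\<integral>\<^sup>+ r. aggr_count Q r \<partial>aggr_step E n S x T)
         \<le> of_nat (card (Q \<inter> S)) + emeasure (walk_pmf E x n) (hits_before_exit Q T)"
proof -
  let ?H = "hits_before_exit Q T"
  have "(\<integral>\<^sup>+ r. aggr_count Q r \<partial>aggr_step E n S x T)
      = (\<integral>\<^sup>+ p. aggr_count Q (map_option (\<lambda>z. insert z S) (stop_point S T p)) \<partial>walk_pmf E x n)"
    by (simp add: aggr_step_def)
  also have "\<dots> \<le> (\<integral>\<^sup>+ p. (of_nat (card (Q \<inter> S)) + indicator ?H p) \<partial>walk_pmf E x n)"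
  proof (rule nn_integral_mono_AE, rule AE_pmfI)
    fix p assume p: "p \<in> set_pmf (walk_pmf E x n)"
    show "aggr_count Q (map_option (\<lambda>z. insert z S) (stop_point S T p))
          \<le> of_nat (card (Q \<inter> S)) + indicator ?H p"
    proof (cases "stop_point S T p")
      case (Some z)
      show ?thesis
      proof (cases "z \<in> Q")
        case True
        have "p \<in> ?H"
          using stop_point_in_trace[OF _ _ Some] walk_pmf_starts_at[OF p] assms True
          by (fastforce simp: hits_before_exit_def)
        have "card (Q \<inter> insert z S) = card (insert z (Q \<inter> S))"
          using True by (simp add: Int_insert_right)
        also have "\<dots> \<le> Suc (card (Q \<inter> S))"
          by (rule card_insert_le_m1) simp_all
        finally have "of_nat (card (Q \<inter> insert z S)) \<le> (of_nat (card (Q \<inter> S)) + 1 :: ennreal)"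
          by (metis of_nat_Suc of_nat_le_iff add.commute)
        with Some \<open>p \<in> ?H\<close> show ?thesis by (simp add: aggr_count_def)
      qed (simp add: Some aggr_count_def)
    qed (simp add: aggr_count_def)
  qed
  also have "\<dots> = of_nat (card (Q \<inter> S)) + emeasure (walk_pmf E x n) ?H"
    by (subst nn_integral_add) (auto simp: emeasure_pmf)
  finally show ?thesis .
qed

lemma idla_trunc_count_le:
  assumes "x \<in> T"
  shows "(\<integral>\<^sup>+ r. aggr_count Q r \<partial>idla_trunc E n t x T)
         \<le> of_nat t * emeasure (walk_pmf E x n) (hits_before_exit Q T)"
proof (induction t)
  case 0
  then show ?case by (simp add: idla_trunc_def aggr_count_def)
next
  case (Suc t)
  let ?e = "emeasure (walk_pmf E x n) (hits_before_exit Q T)"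
  let ?next = "\<lambda>r. case r of None \<Rightarrow> return_pmf None | Some S \<Rightarrow> aggr_step E n S x T"
  have step: "(\<integral>\<^sup>+ r'. aggr_count Q r' \<partial>?next r) \<le> aggr_count Q r + ?e" for r
    using aggr_step_count_le[OF assms]
    by (cases r) (simp_all add: aggr_count_def)
  have "(\<integral>\<^sup>+ r. aggr_count Q r \<partial>idla_trunc E n (Suc t) x T)
      = (\<integral>\<^sup>+ r. \<integral>\<^sup>+ r'. aggr_count Q r' \<partial>?next r \<partial>idla_trunc E n t x T)"
    by (simp add: idla_trunc_def)
  also have "\<dots> \<le> (\<integral>\<^sup>+ r. (aggr_count Q r + ?e) \<partial>idla_trunc E n t x T)"
    by (rule nn_integral_mono) (rule step)
  also have "\<dots> = (\<integral>\<^sup>+ r. aggr_count Q r \<partial>idla_trunc E n t x T) + ?e"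
    by (subst nn_integral_add) (auto simp: emeasure_pmf)
  also have "\<dots> \<le> of_nat (Suc t) * ?e"
    using Suc.IH by (simp add: add_right_mono distrib_right add.commute)
  finally show ?case .
qed

lemma idla_trunc_cover_le:
  assumes "Q \<subseteq> B" "x \<in> B"
  shows "measure_pmf.prob (idla_trunc E n t x B) {r. \<exists>S. r = Some S \<and> B \<subseteq> S} * real (card Q)
         \<le> real t * measure_pmf.prob (walk_pmf E x n) (hits_before_exit Q B)"
proof -
  let ?M = "idla_trunc E n t x B" and ?C = "{r. \<exists>S. r = Some S \<and> B \<subseteq> S}"
  have "ennreal (real (card Q)) * emeasure ?M ?C = (\<integral>\<^sup>+ r. ennreal (real (card Q)) * indicator ?C r \<partial>?M)"
    by (simp add: nn_integral_cmult_indicator)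
  also have "\<dots> \<le> (\<integral>\<^sup>+ r. aggr_count Q r \<partial>?M)"
  proof (rule nn_integral_mono)
    fix r show "ennreal (real (card Q)) * indicator ?C r \<le> aggr_count Q r"
    proof (cases "r \<in> ?C")
      case True
      then obtain S where "r = Some S" "B \<subseteq> S" by auto
      with assms(1) have "Q \<inter> S = Q" by auto
      with True \<open>r = Some S\<close> show ?thesis by (simp add: aggr_count_def)
    qed simp
  qed
  also have "\<dots> \<le> of_nat t * emeasure (walk_pmf E x n) (hits_before_exit Q B)"
    using idla_trunc_count_le[OF assms(2)] .
  finally have "ennreal (real (card Q) * measure ?M ?C)
      \<le> ennreal (real t * measure (walk_pmf E x n) (hits_before_exit Q B))"
    by (simp add: measure_pmf.emeasure_eq_measure ennreal_mult ennreal_of_nat_eq_real_of_nat)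
  then show ?thesis
    by (subst (asm) ennreal_le_iff) (auto simp: mult.commute)
qed

theorem lemma3p1:
  fixes E :: "'a \<Rightarrow> 'a \<Rightarrow> bool" and Q B :: "'a set" and x :: 'a and t :: nat
  assumes sym: "\<And>u v. E u v \<Longrightarrow> E v u"
    and irrefl: "\<And>v. \<not> E v v"
    and locfin: "\<And>v. finite (nbrs E v)"
    and nonisolated: "\<And>v. nbrs E v \<noteq> {}"
    and connected: "\<And>u v. E\<^sup>*\<^sup>* u v"
    and QB: "Q \<subseteq> B" and xB: "x \<in> B" and tpos: "t > 0"
  shows "hit_prob E x B Q \<ge> idla_cover_prob E t x B B * (real (card Q) / real t)"
proof -
  let ?h = "\<lambda>n. measure_pmf.prob (walk_pmf E x n) (hits_before_exit Q B)"
  have hit: "hit_prob E x B Q = (SUP n. ?h n)"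
    by (simp add: hit_prob_def hits_before_exit_def)
  have h_le: "?h n \<le> hit_prob E x B Q" for n
    unfolding hit by (rule cSUP_upper) (auto intro: bdd_aboveI[of _ 1])
  show ?thesis
  proof (cases "card Q = 0")
    case True
    with order_trans[OF measure_nonneg h_le[of 0]] show ?thesis by simp
  next
    case False
    have "idla_cover_prob E t x B B \<le> real t * hit_prob E x B Q / real (card Q)"
      unfolding idla_cover_prob_def
    proof (rule cSUP_least)
      fix n
      have "measure_pmf.prob (idla_trunc E n t x B) {r. \<exists>S. r = Some S \<and> B \<subseteq> S} * real (card Q)
          \<le> real t * hit_prob E x B Q"
        by (rule order_trans[OF idla_trunc_cover_le[OF QB xB] mult_left_mono[OF h_le]]) simp
      with False show "measure_pmf.prob (idla_trunc E n t x B) {r. \<exists>S. r = Some S \<and> B \<subseteq> S}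
          \<le> real t * hit_prob E x B Q / real (card Q)"
        by (simp add: pos_le_divide_eq)
    qed simp
    with False tpos show ?thesis
      by (simp add: field_simps)
  qed
qed

end
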